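(* Let $X\in\mathbb{R}^{m\times n}$ be fixed with rows $x^\alpha$, $V=\frac1nXX^\top$, let $W^K,W^Q\in\mathbb{R}^{n\times n_k}$ have i.i.d. $\mathcal N(0,1)$ entries, and $Y=\frac1nXW^KW^{Q,\top}X^\top$. Define $\overline{Y^\alpha}=\frac1m\sum_\nu Y^{\alpha\nu}$, $\overline{(Y^\alpha)^2}=\frac1m\sum_\nu(Y^{\alpha\nu})^2$, and $$S_1^{\alpha\delta,\beta\omega}=\frac1{n_k}\mathbb{E}\big[(Y^{\alpha\delta}-\overline{Y^\alpha})(Y^{\beta\omega}-\overline{Y^\beta})\big],\qquad S_2^{\alpha\delta}=\frac1{n_k}\mathbb{E}\Big[(Y^{\alpha\delta}-\overline{Y^\alpha})^2-\big(\overline{(Y^\alpha)^2}-\overline{Y^\alpha}^2\big)\Big].$$ Then $$S_1^{\alpha\delta,\beta\omega}=V^{\alpha\beta}\big(V^{\delta\omega}-V^{\delta\bar x}-V^{\omega\bar x}+V^{\bar x\bar x}\big),\qquad S_2^{\alpha\delta}=V^{\alpha\alpha}\big(V^{\delta\delta}-2V^{\delta\bar x}+2V^{\bar x\bar x}-\bar V\big).$$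
   Context: $\bar x=\frac1m\sum_\nu x^\nu$ is the average token; $V^{\alpha\bar x}=\frac1n\langle x^\alpha,\bar x\rangle=\frac1m\sum_\nu V^{\alpha\nu}$, $V^{\bar x\bar x}=\frac1n\langle\bar x,\bar x\rangle$, and $\bar V=\frac1m\sum_\nu V^{\nu\nu}$. *)

theory Defs
  imports "HOL-Probability.Probability"
begin

text \<open>Rows of X: X a i for a < m (token index), i < n (feature index).\<close>

definition Vmat :: "nat \<Rightarrow> (nat \<Rightarrow> nat \<Rightarrow> real) \<Rightarrow> nat \<Rightarrow> nat \<Rightarrow> real" where
  "Vmat n X a b = (1 / real n) * (\<Sum>i<n. X a i * X b i)"

text \<open>V^{a xbar} = (1/n) <x^a, xbar>, xbar = (1/m) sum_nu x^nu\<close>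
definition Vxbar :: "nat \<Rightarrow> nat \<Rightarrow> (nat \<Rightarrow> nat \<Rightarrow> real) \<Rightarrow> nat \<Rightarrow> real" where
  "Vxbar m n X a = (1 / real m) * (\<Sum>\<nu><m. Vmat n X a \<nu>)"

definition Vxbarxbar :: "nat \<Rightarrow> nat \<Rightarrow> (nat \<Rightarrow> nat \<Rightarrow> real) \<Rightarrow> real" where
  "Vxbarxbar m n X = (1 / real m) * (\<Sum>\<nu><m. Vxbar m n X \<nu>)"

definition Vbar :: "nat \<Rightarrow> nat \<Rightarrow> (nat \<Rightarrow> nat \<Rightarrow> real) \<Rightarrow> real" where
  "Vbar m n X = (1 / real m) * (\<Sum>\<nu><m. Vmat n X \<nu> \<nu>)"

definition Yrv :: "nat \<Rightarrow> nat \<Rightarrow> (nat \<Rightarrow> nat \<Rightarrow> real) \<Rightarrow> (nat \<Rightarrow> nat \<Rightarrow> 'a \<Rightarrow> real)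
    \<Rightarrow> (nat \<Rightarrow> nat \<Rightarrow> 'a \<Rightarrow> real) \<Rightarrow> nat \<Rightarrow> nat \<Rightarrow> 'a \<Rightarrow> real" where
  "Yrv n nk X WK WQ a b w =
     (1 / real n) * (\<Sum>i<n. \<Sum>j<n. X a i * (\<Sum>k<nk. WK i k w * WQ j k w) * X b j)"

definition Ybar :: "nat \<Rightarrow> nat \<Rightarrow> nat \<Rightarrow> (nat \<Rightarrow> nat \<Rightarrow> real) \<Rightarrow> (nat \<Rightarrow> nat \<Rightarrow> 'a \<Rightarrow> real)
    \<Rightarrow> (nat \<Rightarrow> nat \<Rightarrow> 'a \<Rightarrow> real) \<Rightarrow> nat \<Rightarrow> 'a \<Rightarrow> real" where
  "Ybar m n nk X WK WQ a w = (1 / real m) * (\<Sum>\<nu><m. Yrv n nk X WK WQ a \<nu> w)"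

definition Ysqbar :: "nat \<Rightarrow> nat \<Rightarrow> nat \<Rightarrow> (nat \<Rightarrow> nat \<Rightarrow> real) \<Rightarrow> (nat \<Rightarrow> nat \<Rightarrow> 'a \<Rightarrow> real)
    \<Rightarrow> (nat \<Rightarrow> nat \<Rightarrow> 'a \<Rightarrow> real) \<Rightarrow> nat \<Rightarrow> 'a \<Rightarrow> real" where
  "Ysqbar m n nk X WK WQ a w = (1 / real m) * (\<Sum>\<nu><m. (Yrv n nk X WK WQ a \<nu> w)\<^sup>2)"

definition Wfam :: "(nat \<Rightarrow> nat \<Rightarrow> 'a \<Rightarrow> real) \<Rightarrow> (nat \<Rightarrow> nat \<Rightarrow> 'a \<Rightarrow> real)
    \<Rightarrow> (nat \<times> nat) + (nat \<times> nat) \<Rightarrow> 'a \<Rightarrow> real" where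
  "Wfam WK WQ j = (case j of Inl (i, k) \<Rightarrow> WK i k | Inr (i, k) \<Rightarrow> WQ i k)"

end

theory Submission
  imports Defs
begin

text \<open>Write Y^{ab} = (1/n) (x^a)^T W^K (W^Q)^T x^b as a bilinear form in the rows of X. Since it is
  linear in x^b, the centred entry Y^{ad} - mean_nu Y^{a nu} is the same form evaluated at x^a and
  x^d - xbar. For independent standard Gaussian weights, E[W^K_{ik} W^Q_{jk} W^K_{i'k'} W^Q_{j'k'}]
  is 1 if (i, j, k) = (i', j', k') and 0 otherwise, so the second moment of the form factorises as
  n_k <u, u'>/n <v, v'>/n. This gives S_1 at once; for S_2, write the empirical variance of the
  row Y^a as the mean of its squared deviations and apply S_1 termwise.\<close>

definition scaled_inner :: "nat \<Rightarrow> (nat \<Rightarrow> real) \<Rightarrow> (nat \<Rightarrow> real) \<Rightarrow> real" where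
  "scaled_inner n u v = (1 / real n) * (\<Sum>i<n. u i * v i)"

definition row_mean :: "nat \<Rightarrow> (nat \<Rightarrow> nat \<Rightarrow> real) \<Rightarrow> nat \<Rightarrow> real" where
  "row_mean m X j = (1 / real m) * (\<Sum>\<nu><m. X \<nu> j)"

definition kq_form :: "nat \<Rightarrow> nat \<Rightarrow> (nat \<Rightarrow> nat \<Rightarrow> 'a \<Rightarrow> real) \<Rightarrow> (nat \<Rightarrow> nat \<Rightarrow> 'a \<Rightarrow> real)
    \<Rightarrow> (nat \<Rightarrow> real) \<Rightarrow> (nat \<Rightarrow> real) \<Rightarrow> 'a \<Rightarrow> real" where
  "kq_form n nk WK WQ u v w =
     (1 / real n) * (\<Sum>i<n. \<Sum>j<n. u i * (\<Sum>k<nk. WK i k w * WQ j k w) * v j)"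

lemma Yrv_eq_kq_form: "Yrv n nk X WK WQ a b = kq_form n nk WK WQ (X a) (X b)"
  by (simp add: Yrv_def kq_form_def fun_eq_iff)

lemma kq_form_as_triple_sum:
  "kq_form n nk WK WQ u v w =
     (1 / real n) * (\<Sum>(i, j, k)\<in>{..<n} \<times> {..<n} \<times> {..<nk}. u i * v j * (WK i k w * WQ j k w))"
  by (simp add: kq_form_def sum.cartesian_product sum_distrib_left sum_distrib_right mult_ac)

lemma Yrv_sub_Ybar:
  "Yrv n nk X WK WQ a d w - Ybar m n nk X WK WQ a w
     = kq_form n nk WK WQ (X a) (\<lambda>j. X d j - row_mean m X j) w"
  by (simp add: Ybar_def Yrv_eq_kq_form kq_form_def row_mean_def algebra_simps
      sum_subtractf sum_distrib_left sum_distrib_right flip: sum.swap[of _ "{..<m}"])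

lemma scaled_inner_row_mean: "scaled_inner n (X a) (row_mean m X) = Vxbar m n X a"
  by (simp add: scaled_inner_def row_mean_def Vxbar_def Vmat_def sum_distrib_left mult_ac
      sum.swap[of _ "{..<n}"])

lemma scaled_inner_row_mean_row_mean:
  "scaled_inner n (row_mean m X) (row_mean m X) = Vxbarxbar m n X"
proof -
  have "scaled_inner n (row_mean m X) (row_mean m X)
      = (1 / real m) * (\<Sum>\<nu><m. scaled_inner n (X \<nu>) (row_mean m X))"
    by (simp add: scaled_inner_def row_mean_def sum_distrib_left sum_distrib_right mult_ac
      sum.swap[of _ "{..<n}"])
  then show ?thesis by (simp add: scaled_inner_row_mean Vxbarxbar_def)
qed

lemma scaled_inner_rows: "scaled_inner n (X a) (X b) = Vmat n X a b"
  by (simp add: scaled_inner_def Vmat_def)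

lemma scaled_inner_diff:
  "scaled_inner n (\<lambda>j. u j - r j) (\<lambda>j. v j - r j)
     = scaled_inner n u v - scaled_inner n u r - scaled_inner n v r + scaled_inner n r r"
  by (simp add: scaled_inner_def algebra_simps sum_subtractf sum.distrib)

lemma scaled_inner_centered_rows:
  "scaled_inner n (\<lambda>j. X a j - row_mean m X j) (\<lambda>j. X b j - row_mean m X j)
     = Vmat n X a b - Vxbar m n X a - Vxbar m n X b + Vxbarxbar m n X"
  by (simp add: scaled_inner_diff scaled_inner_rows scaled_inner_row_mean
      scaled_inner_row_mean_row_mean)

lemma mean_sq_sub_sq_mean:
  fixes y :: "nat \<Rightarrow> real"
  assumes "0 < m"
  shows "(1 / real m) * (\<Sum>\<nu><m. (y \<nu>)\<^sup>2) - ((1 / real m) * (\<Sum>\<nu><m. y \<nu>))\<^sup>2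
           = (1 / real m) * (\<Sum>\<nu><m. (y \<nu> - (1 / real m) * (\<Sum>\<mu><m. y \<mu>))\<^sup>2)"
proof -
  define c where "c = (1 / real m) * (\<Sum>\<nu><m. y \<nu>)"
  have sum_y: "(\<Sum>\<nu><m. y \<nu>) = real m * c"
    using assms by (simp add: c_def)
  have "(\<Sum>\<nu><m. (y \<nu> - c)\<^sup>2) = (\<Sum>\<nu><m. (y \<nu>)\<^sup>2) - 2 * c * (\<Sum>\<nu><m. y \<nu>) + real m * c\<^sup>2"
    by (simp add: power2_diff sum.distrib sum_subtractf sum_distrib_left mult_ac)
  then show ?thesis
    using assms unfolding c_def[symmetric] sum_y by (simp add: field_simps power2_eq_square)
qed

lemma mean_centered_gram_diag:
  assumes "0 < m"
  shows "(1 / real m) * (\<Sum>\<nu><m. Vmat n X \<nu> \<nu> - Vxbar m n X \<nu> - Vxbar m n X \<nu> + Vxbarxbar m n X)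
           = Vbar m n X - Vxbarxbar m n X"
  using assms
  by (simp add: sum.distrib sum_subtractf sum_distrib_left Vbar_def Vxbarxbar_def algebra_simps)

lemma std_normal_distributed_moments:
  assumes D: "distributed M lborel Z (\<lambda>x. ennreal (std_normal_density x))"
  shows "integrable M (\<lambda>w. Z w ^ k)"
    and "(LINT w|M. Z w ^ 1) = 0"
    and "(LINT w|M. Z w ^ 2) = 1"
  using distributed_integrable[OF D, of "\<lambda>x. x ^ k"] integrable_std_normal_moment[of k]
    distributed_integral[OF D, of "\<lambda>x. x ^ 1"] integral_std_normal_moment_odd[of 0]
    distributed_integral[OF D, of "\<lambda>x. x ^ 2"] integral_std_normal_moment_even[of 1]
  by simp_all

lemma (in prob_space) indep_std_normal_prod_power:
  assumes ind: "indep_vars (\<lambda>_. borel) G I"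
    and D: "\<And>p. p \<in> I \<Longrightarrow> distributed M lborel (G p) (\<lambda>x. ennreal (std_normal_density x))"
    and J: "finite J" "J \<subseteq> I"
  shows "has_bochner_integral M (\<lambda>w. \<Prod>q\<in>J. G q w ^ e q) (\<Prod>q\<in>J. LINT w|M. G q w ^ e q)"
proof -
  have indJ: "indep_vars (\<lambda>_. borel) (\<lambda>q w. G q w ^ e q) J"
    by (rule indep_vars_compose2[OF indep_vars_subset[OF ind J(2)]]) auto
  have "\<And>q. q \<in> J \<Longrightarrow> integrable M (\<lambda>w. G q w ^ e q)"
    using std_normal_distributed_moments(1)[OF D] J(2) by blast
  then show ?thesis
    using indep_vars_integrable[OF J(1) indJ] indep_vars_lebesgue_integral[OF J(1) indJ]
    by (simp add: has_bochner_integral_iff)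
qed

text \<open>The distinctness hypotheses hold when p1, p3 index entries of W^K and p2, p4 entries of
  W^Q; they leave p1 = p3, p2 = p4 as the only pairing in Wick's formula.\<close>
lemma (in prob_space) indep_std_normal_fourth_moment:
  assumes ind: "indep_vars (\<lambda>_. borel) G I"
    and D: "\<And>p. p \<in> I \<Longrightarrow> distributed M lborel (G p) (\<lambda>x. ennreal (std_normal_density x))"
    and I: "p1 \<in> I" "p2 \<in> I" "p3 \<in> I" "p4 \<in> I"
    and ne: "p1 \<noteq> p2" "p1 \<noteq> p4" "p3 \<noteq> p2" "p3 \<noteq> p4"
  shows "has_bochner_integral M (\<lambda>w. G p1 w * G p2 w * (G p3 w * G p4 w))
           (if p1 = p3 \<and> p2 = p4 then 1 else 0)"
proof -
  define J where "J = {p1, p2, p3, p4}"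
  define e :: "_ \<Rightarrow> nat"
    where "e q = of_bool (q = p1) + of_bool (q = p2) + of_bool (q = p3) + of_bool (q = p4)" for q
  have J_sub: "finite J" "J \<subseteq> I" and p_J: "p1 \<in> J" "p2 \<in> J" "p3 \<in> J" "p4 \<in> J"
    using I by (auto simp: J_def)
  have single: "(\<Prod>q\<in>J. G q w ^ of_bool (q = p)) = G p w" if "p \<in> J" for p w
  proof -
    have "(\<Prod>q\<in>J. G q w ^ of_bool (q = p)) = (\<Prod>q\<in>J. if q = p then G q w else 1)"
      by (rule prod.cong) auto
    with J_sub(1) that show ?thesis by simp
  qed
  have "G p1 w * G p2 w * (G p3 w * G p4 w) = (\<Prod>q\<in>J. G q w ^ e q)" for w
    unfolding e_def power_add prod.distrib by (simp add: single p_J)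
  moreover have "(\<Prod>q\<in>J. LINT w|M. G q w ^ e q) = (if p1 = p3 \<and> p2 = p4 then 1 else 0)"
  proof (cases "p1 = p3 \<and> p2 = p4")
    case True
    then have "J = {p1, p2}" "e p1 = 2" "e p2 = 2"
      using ne by (auto simp: J_def e_def)
    then show ?thesis
      using True ne std_normal_distributed_moments(3)[OF D] I by simp
  next
    case False
    then obtain q where q: "q \<in> J" "e q = 1"
      using ne p_J by (auto simp: e_def)
    then have "(LINT w|M. G q w ^ e q) = 0"
      using J_sub std_normal_distributed_moments(2)[OF D, of q] by auto
    with q(1) J_sub(1) False show ?thesis
      by auto
  qed
  ultimately show ?thesis
    using indep_std_normal_prod_power[OF ind D J_sub, of e] by simp
qed

lemma sum_triple_delta:
  fixes f :: "'i \<Rightarrow> 'j \<Rightarrow> 'k \<Rightarrow> real"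
  assumes "(i, j, k) \<in> T" "finite T"
  shows "(\<Sum>(i', j', k')\<in>T. f i' j' k' * (if (i, j, k) = (i', j', k') then 1 else 0)) = f i j k"
proof -
  have "(\<Sum>(i', j', k')\<in>T. f i' j' k' * (if (i, j, k) = (i', j', k') then 1 else 0))
      = (\<Sum>t\<in>T. if t = (i, j, k) then f i j k else 0)"
    by (rule sum.cong) (auto split: if_splits)
  with assms show ?thesis
    by simp
qed

locale gaussian_key_query = prob_space M for M :: "'a measure" +
  fixes n nk :: nat and WK WQ :: "nat \<Rightarrow> nat \<Rightarrow> 'a \<Rightarrow> real"
  assumes indep:
      "indep_vars (\<lambda>_. borel) (Wfam WK WQ) (({..<n} \<times> {..<nk}) <+> ({..<n} \<times> {..<nk}))"
    and WK_std_normal: "\<And>i k. i < n \<Longrightarrow> k < nk \<Longrightarrow>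
          distributed M lborel (WK i k) (\<lambda>x. ennreal (std_normal_density x))"
    and WQ_std_normal: "\<And>i k. i < n \<Longrightarrow> k < nk \<Longrightarrow>
          distributed M lborel (WQ i k) (\<lambda>x. ennreal (std_normal_density x))"
begin

lemma key_query_fourth_moment:
  assumes "(i, j, k) \<in> {..<n} \<times> {..<n} \<times> {..<nk}"
    and "(i', j', k') \<in> {..<n} \<times> {..<n} \<times> {..<nk}"
  shows "has_bochner_integral M (\<lambda>w. WK i k w * WQ j k w * (WK i' k' w * WQ j' k' w))
           (if (i, j, k) = (i', j', k') then 1 else 0)"
proof -
  have D: "distributed M lborel (Wfam WK WQ p) (\<lambda>x. ennreal (std_normal_density x))"
    if "p \<in> ({..<n} \<times> {..<nk}) <+> ({..<n} \<times> {..<nk})" for p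
    using that by (auto simp: Wfam_def intro: WK_std_normal WQ_std_normal)
  have mem: "Inl (i, k) \<in> ({..<n} \<times> {..<nk}) <+> ({..<n} \<times> {..<nk})"
    "Inr (j, k) \<in> ({..<n} \<times> {..<nk}) <+> ({..<n} \<times> {..<nk})"
    "Inl (i', k') \<in> ({..<n} \<times> {..<nk}) <+> ({..<n} \<times> {..<nk})"
    "Inr (j', k') \<in> ({..<n} \<times> {..<nk}) <+> ({..<n} \<times> {..<nk})"
    using assms by auto
  have "(Inl (i, k) = Inl (i', k') \<and> Inr (j, k) = Inr (j', k')) = ((i, j, k) = (i', j', k'))"
    by auto
  with indep_std_normal_fourth_moment[OF indep D mem] show ?thesis
    by (simp add: Wfam_def)
qed

lemma kq_form_second_moment:
  "has_bochner_integral M (\<lambda>w. kq_form n nk WK WQ u v w * kq_form n nk WK WQ u' v' w)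
     (real nk * scaled_inner n u u' * scaled_inner n v v')"
proof -
  let ?T = "{..<n} \<times> {..<n} \<times> {..<nk}"
  have expand: "kq_form n nk WK WQ u v w * kq_form n nk WK WQ u' v' w
    = (1 / real n)\<^sup>2 * (\<Sum>(i, j, k)\<in>?T. \<Sum>(i', j', k')\<in>?T.
        u i * v j * (u' i' * v' j') * (WK i k w * WQ j k w * (WK i' k' w * WQ j' k' w)))" for w
    by (simp add: kq_form_as_triple_sum sum_product power2_eq_square case_prod_beta mult_ac)
  have "has_bochner_integral M (\<lambda>w. kq_form n nk WK WQ u v w * kq_form n nk WK WQ u' v' w)
      ((1 / real n)\<^sup>2 * (\<Sum>(i, j, k)\<in>?T. \<Sum>(i', j', k')\<in>?T.
        u i * v j * (u' i' * v' j') * (if (i, j, k) = (i', j', k') then 1 else 0)))"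
    unfolding expand
    by (intro has_bochner_integral_mult_right has_bochner_integral_sum)
      (auto simp only: prod.case intro!: has_bochner_integral_sum has_bochner_integral_mult_right
        key_query_fourth_moment)
  also have "(\<Sum>(i, j, k)\<in>?T. \<Sum>(i', j', k')\<in>?T.
        u i * v j * (u' i' * v' j') * (if (i, j, k) = (i', j', k') then 1 else 0))
      = (\<Sum>(i, j, k)\<in>?T. u i * v j * (u' i * v' j))"
    using sum_triple_delta[of _ _ _ ?T] by (intro sum.cong refl) auto
  also have "\<dots> = real nk * (\<Sum>i<n. u i * u' i) * (\<Sum>j<n. v j * v' j)"
    by (simp add: sum.cartesian_product[symmetric] sum_product sum_distrib_left mult_ac)
  finally show ?thesis
    by (simp add: scaled_inner_def power2_eq_square)
qed

lemma centered_cross_moment: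
  "has_bochner_integral M
     (\<lambda>w. (Yrv n nk X WK WQ a d w - Ybar m n nk X WK WQ a w)
        * (Yrv n nk X WK WQ b e w - Ybar m n nk X WK WQ b w))
     (real nk * Vmat n X a b * (Vmat n X d e - Vxbar m n X d - Vxbar m n X e + Vxbarxbar m n X))"
  using kq_form_second_moment[of "X a" "\<lambda>j. X d j - row_mean m X j"
      "X b" "\<lambda>j. X e j - row_mean m X j"]
  by (simp add: Yrv_sub_Ybar scaled_inner_rows scaled_inner_centered_rows)

lemma centered_square_moment:
  assumes "0 < m"
  shows "has_bochner_integral M
     (\<lambda>w. (Yrv n nk X WK WQ a d w - Ybar m n nk X WK WQ a w)\<^sup>2
        - (Ysqbar m n nk X WK WQ a w - (Ybar m n nk X WK WQ a w)\<^sup>2))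
     (real nk * Vmat n X a a
        * (Vmat n X d d - 2 * Vxbar m n X d + 2 * Vxbarxbar m n X - Vbar m n X))"
proof -
  let ?Yc = "\<lambda>b w. Yrv n nk X WK WQ a b w - Ybar m n nk X WK WQ a w"
  let ?Vc = "\<lambda>b. Vmat n X b b - Vxbar m n X b - Vxbar m n X b + Vxbarxbar m n X"
  have "Ysqbar m n nk X WK WQ a w - (Ybar m n nk X WK WQ a w)\<^sup>2
      = (1 / real m) * (\<Sum>\<nu><m. (?Yc \<nu> w)\<^sup>2)" for w
    using mean_sq_sub_sq_mean[OF assms, of "\<lambda>\<nu>. Yrv n nk X WK WQ a \<nu> w"]
    by (simp add: Ysqbar_def Ybar_def)
  then have integrand:
    "(\<lambda>w. (?Yc d w)\<^sup>2 - (Ysqbar m n nk X WK WQ a w - (Ybar m n nk X WK WQ a w)\<^sup>2))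
      = (\<lambda>w. (?Yc d w)\<^sup>2 - (1 / real m) * (\<Sum>\<nu><m. (?Yc \<nu> w)\<^sup>2))"
    by simp
  have "has_bochner_integral M
      (\<lambda>w. (?Yc d w)\<^sup>2 - (1 / real m) * (\<Sum>\<nu><m. (?Yc \<nu> w)\<^sup>2))
      (real nk * Vmat n X a a * ?Vc d - (1 / real m) * (\<Sum>\<nu><m. real nk * Vmat n X a a * ?Vc \<nu>))"
    unfolding power2_eq_square
    by (intro has_bochner_integral_diff has_bochner_integral_mult_right has_bochner_integral_sum
        centered_cross_moment)
  also have "(1 / real m) * (\<Sum>\<nu><m. real nk * Vmat n X a a * ?Vc \<nu>)
      = real nk * Vmat n X a a * ((1 / real m) * (\<Sum>\<nu><m. ?Vc \<nu>))"
    by (simp add: sum_distrib_left mult_ac)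
  also have "(1 / real m) * (\<Sum>\<nu><m. ?Vc \<nu>) = Vbar m n X - Vxbarxbar m n X"
    by (rule mean_centered_gram_diag[OF assms])
  also have "real nk * Vmat n X a a * ?Vc d - real nk * Vmat n X a a * (Vbar m n X - Vxbarxbar m n X)
      = real nk * Vmat n X a a
        * (Vmat n X d d - 2 * Vxbar m n X d + 2 * Vxbarxbar m n X - Vbar m n X)"
    by (simp add: algebra_simps)
  finally show ?thesis
    unfolding integrand .
qed

end

theorem lemmaC2:
  fixes M :: "'a measure" and m n nk :: nat
    and X :: "nat \<Rightarrow> nat \<Rightarrow> real"
    and WK WQ :: "nat \<Rightarrow> nat \<Rightarrow> 'a \<Rightarrow> real"
    and \<alpha> \<delta> \<beta> \<omega> :: nat
  assumes "prob_space M"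
    and "0 < m" and "0 < n" and "0 < nk"
    and "prob_space.indep_vars M (\<lambda>_. borel) (Wfam WK WQ)
           (({..<n} \<times> {..<nk}) <+> ({..<n} \<times> {..<nk}))"
    and "\<And>i k. i < n \<Longrightarrow> k < nk \<Longrightarrow> distributed M lborel (WK i k) (\<lambda>x. ennreal (std_normal_density x))"
    and "\<And>i k. i < n \<Longrightarrow> k < nk \<Longrightarrow> distributed M lborel (WQ i k) (\<lambda>x. ennreal (std_normal_density x))"
    and "\<alpha> < m" and "\<delta> < m" and "\<beta> < m" and "\<omega> < m"
  shows "((1 / real nk) * (LINT w|M. (Yrv n nk X WK WQ \<alpha> \<delta> w - Ybar m n nk X WK WQ \<alpha> w)
                                   * (Yrv n nk X WK WQ \<beta> \<omega> w - Ybar m n nk X WK WQ \<beta> w))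
           = Vmat n X \<alpha> \<beta> * (Vmat n X \<delta> \<omega> - Vxbar m n X \<delta> - Vxbar m n X \<omega> + Vxbarxbar m n X))
         \<and> ((1 / real nk) * (LINT w|M. (Yrv n nk X WK WQ \<alpha> \<delta> w - Ybar m n nk X WK WQ \<alpha> w)\<^sup>2
                                   - (Ysqbar m n nk X WK WQ \<alpha> w - (Ybar m n nk X WK WQ \<alpha> w)\<^sup>2))
           = Vmat n X \<alpha> \<alpha> * (Vmat n X \<delta> \<delta> - 2 * Vxbar m n X \<delta> + 2 * Vxbarxbar m n X - Vbar m n X))"
proof -
  txt \<open>Neither 0 < n nor the bounds on the indices are needed.\<close>
  interpret gaussian_key_query M n nk WK WQ
    using assms(1,5-7) by (simp add: gaussian_key_query_def gaussian_key_query_axioms_def)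
  show ?thesis
    using \<open>0 < nk\<close>
    by (simp add: has_bochner_integral_integral_eq[OF centered_cross_moment]
        has_bochner_integral_integral_eq[OF centered_square_moment[OF \<open>0 < m\<close>]])
qed

end
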